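(* Let $S$ be a group, $A$ a left $S$-act and $I$ a set with $|I|\ge 2$. Then $A^{(\ast)I}$ is geometrically equivalent to $A^{(\ast)2}=A_1\amalg A_2$, where $A_1=A=A_2$.
   Context: A left $S$-act is a nonempty set with an action $S\times A\to A$ satisfying $1a=a$, $(st)a=s(ta)$; homomorphisms preserve the action; $\amalg$ denotes coproduct (disjoint union), and $A^{(\ast)I}=\coprod_{i\in I}A_i$ with each $A_i=A$. For a nonempty finite set $X$, $F_X=\coprod_{x\in X}S_x$ is the free $S$-act on $X$. For an $S$-act $G$ and a relation $T\subseteq F_X\times F_X$, $T'_G=\{\mu:F_X\to G \text{ homomorphism}: T\subseteq\ker\mu\}$ and $T''_G=\bigcap_{\mu\in T'_G}\ker\mu$ (empty intersection $=F_X\times F_X$). $S$-acts $G_1,G_2$ are geometrically equivalent iff $T''_{G_1}=T''_{G_2}$ for all nonempty finite $X$ and all $T\subseteq F_X\times F_X$. *)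

theory Defs
  imports "HOL-Algebra.Group"
begin

definition is_act :: "('g,'m) monoid_scheme \<Rightarrow> 'a set \<Rightarrow> ('g \<Rightarrow> 'a \<Rightarrow> 'a) \<Rightarrow> bool" where
  "is_act S A f \<longleftrightarrow> A \<noteq> {}
     \<and> (\<forall>s\<in>carrier S. \<forall>a\<in>A. f s a \<in> A)
     \<and> (\<forall>a\<in>A. f \<one>\<^bsub>S\<^esub> a = a)
     \<and> (\<forall>s\<in>carrier S. \<forall>t\<in>carrier S. \<forall>a\<in>A. f (s \<otimes>\<^bsub>S\<^esub> t) a = f s (f t a))"

definition act_hom :: "('g,'m) monoid_scheme \<Rightarrow> 'a set \<Rightarrow> ('g \<Rightarrow> 'a \<Rightarrow> 'a)
     \<Rightarrow> 'b set \<Rightarrow> ('g \<Rightarrow> 'b \<Rightarrow> 'b) \<Rightarrow> ('a \<Rightarrow> 'b) \<Rightarrow> bool" where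
  "act_hom S A f B g h \<longleftrightarrow> (\<forall>a\<in>A. h a \<in> B) \<and> (\<forall>s\<in>carrier S. \<forall>a\<in>A. h (f s a) = g s (h a))"

text \<open>Coproduct of copies of A indexed by I: carrier I \<times> A, componentwise action.\<close>
definition copower_carrier :: "'i set \<Rightarrow> 'a set \<Rightarrow> ('i \<times> 'a) set" where
  "copower_carrier I A = I \<times> A"

definition copower_action :: "('g \<Rightarrow> 'a \<Rightarrow> 'a) \<Rightarrow> 'g \<Rightarrow> 'i \<times> 'a \<Rightarrow> 'i \<times> 'a" where
  "copower_action f s p = (fst p, f s (snd p))"

text \<open>Free S-act F_X = coproduct of copies S_x of S (left regular action).\<close>
definition free_carrier :: "('g,'m) monoid_scheme \<Rightarrow> 'x set \<Rightarrow> ('x \<times> 'g) set" where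
  "free_carrier S X = X \<times> carrier S"

definition free_action :: "('g,'m) monoid_scheme \<Rightarrow> 'g \<Rightarrow> 'x \<times> 'g \<Rightarrow> 'x \<times> 'g" where
  "free_action S s p = (fst p, s \<otimes>\<^bsub>S\<^esub> snd p)"

definition hker :: "'a set \<Rightarrow> ('a \<Rightarrow> 'b) \<Rightarrow> ('a \<times> 'a) set" where
  "hker A h = {(u,v). u \<in> A \<and> v \<in> A \<and> h u = h v}"

text \<open>T''_G: intersection of kernels of all homomorphisms F_X \<rightarrow> G whose kernel contains T
  (empty intersection = F_X \<times> F_X).\<close>
definition dclos :: "('g,'m) monoid_scheme \<Rightarrow> 'x set \<Rightarrow> 'b set \<Rightarrow> ('g \<Rightarrow> 'b \<Rightarrow> 'b)
     \<Rightarrow> (('x \<times> 'g) \<times> ('x \<times> 'g)) set \<Rightarrow> (('x \<times> 'g) \<times> ('x \<times> 'g)) set" where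
  "dclos S X G g T =
     {(u,v). u \<in> free_carrier S X \<and> v \<in> free_carrier S X \<and>
        (\<forall>h. act_hom S (free_carrier S X) (free_action S) G g h
              \<and> T \<subseteq> hker (free_carrier S X) h \<longrightarrow> h u = h v)}"

text \<open>Geometric equivalence; finite sets X of variables are taken inside nat.\<close>
definition geom_equiv :: "('g,'m) monoid_scheme \<Rightarrow> 'a set \<Rightarrow> ('g \<Rightarrow> 'a \<Rightarrow> 'a)
     \<Rightarrow> 'b set \<Rightarrow> ('g \<Rightarrow> 'b \<Rightarrow> 'b) \<Rightarrow> bool" where
  "geom_equiv S G1 g1 G2 g2 \<longleftrightarrow>
     (\<forall>X :: nat set. finite X \<longrightarrow> X \<noteq> {} \<longrightarrow>
        (\<forall>T. T \<subseteq> free_carrier S X \<times> free_carrier S X \<longrightarrow>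
             dclos S X G1 g1 T = dclos S X G2 g2 T))"

end

theory Submission
  imports Defs
begin

text \<open>If any two distinct points of G1 are separated by some homomorphism G1 \<rightarrow> G2, then the
  kernel of every homomorphism from a free act into G1 is an intersection of kernels of
  homomorphisms into G2, so closures over G2 are contained in closures over G1. Copowers of A
  indexed by I and by J, with |I|, |J| \<ge> 2, separate each other: send the component of one
  point to one chosen index and all other components to a second one.\<close>

definition act_separated_by :: "('g,'m) monoid_scheme \<Rightarrow> 'a set \<Rightarrow> ('g \<Rightarrow> 'a \<Rightarrow> 'a)
     \<Rightarrow> 'b set \<Rightarrow> ('g \<Rightarrow> 'b \<Rightarrow> 'b) \<Rightarrow> bool" where
  "act_separated_by S G1 g1 G2 g2 \<longleftrightarrow>
     (\<forall>a\<in>G1. \<forall>b\<in>G1. a \<noteq> b \<longrightarrow> (\<exists>\<phi>. act_hom S G1 g1 G2 g2 \<phi> \<and> \<phi> a \<noteq> \<phi> b))"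

lemma act_hom_comp:
  assumes "act_hom S A f B g h" and "act_hom S B g C k \<phi>"
  shows "act_hom S A f C k (\<phi> \<circ> h)"
  using assms unfolding act_hom_def by auto

lemma hker_subset_hker_comp: "hker A h \<subseteq> hker A (\<phi> \<circ> h)"
  unfolding hker_def by auto

lemma dclos_subset_if_act_separated_by:
  assumes "act_separated_by S G1 g1 G2 g2"
  shows "dclos S X G2 g2 T \<subseteq> dclos S X G1 g1 T"
proof
  fix p assume p: "p \<in> dclos S X G2 g2 T"
  obtain u v where uv: "p = (u, v)" by (cases p)
  let ?F = "free_carrier S X"
  have u: "u \<in> ?F" and v: "v \<in> ?F"
    and closed2: "\<And>h'. act_hom S ?F (free_action S) G2 g2 h' \<Longrightarrow> T \<subseteq> hker ?F h' \<Longrightarrow> h' u = h' v"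
    using p uv unfolding dclos_def by auto
  have "h u = h v" if h: "act_hom S ?F (free_action S) G1 g1 h" and T: "T \<subseteq> hker ?F h" for h
  proof (rule ccontr)
    assume "h u \<noteq> h v"
    moreover have "h u \<in> G1" "h v \<in> G1"
      using h u v unfolding act_hom_def by auto
    ultimately obtain \<phi> where \<phi>: "act_hom S G1 g1 G2 g2 \<phi>" and "\<phi> (h u) \<noteq> \<phi> (h v)"
      using assms unfolding act_separated_by_def by blast
    moreover have "(\<phi> \<circ> h) u = (\<phi> \<circ> h) v"
      using closed2 act_hom_comp[OF h \<phi>] T hker_subset_hker_comp by blast
    ultimately show False by simp
  qed
  then show "p \<in> dclos S X G1 g1 T"
    using u v uv unfolding dclos_def by auto
qed

lemma geom_equiv_if_act_separated_by:
  assumes "act_separated_by S G1 g1 G2 g2" and "act_separated_by S G2 g2 G1 g1"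
  shows "geom_equiv S G1 g1 G2 g2"
  unfolding geom_equiv_def
  using dclos_subset_if_act_separated_by[OF assms(1)] dclos_subset_if_act_separated_by[OF assms(2)]
  by blast

lemma copower_act_separated_by_copower:
  fixes I :: "'i set" and J :: "'j set" and A :: "'a set"
  assumes "j1 \<in> J" "j2 \<in> J" "j1 \<noteq> j2"
  shows "act_separated_by S (copower_carrier I A) (copower_action act)
                            (copower_carrier J A) (copower_action act)"
  unfolding act_separated_by_def
proof (intro ballI impI)
  fix a b assume a: "a \<in> copower_carrier I A" and b: "b \<in> copower_carrier I A" and "a \<noteq> b"
  define \<phi> where "\<phi> p = (if fst p = fst a then j1 else j2, snd p)" for p :: "'i \<times> 'a"
  have "act_hom S (copower_carrier I A) (copower_action act) (copower_carrier J A) (copower_action act) \<phi>"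
    using assms unfolding act_hom_def \<phi>_def copower_carrier_def copower_action_def by auto
  moreover have "\<phi> a \<noteq> \<phi> b"
    using \<open>a \<noteq> b\<close> assms(3) unfolding \<phi>_def by (auto simp: prod_eq_iff)
  ultimately show "\<exists>\<phi>. act_hom S (copower_carrier I A) (copower_action act)
                              (copower_carrier J A) (copower_action act) \<phi> \<and> \<phi> a \<noteq> \<phi> b"
    by blast
qed

theorem proposition3p18:
  fixes S :: "('g,'m) monoid_scheme" and A :: "'a set" and act :: "'g \<Rightarrow> 'a \<Rightarrow> 'a"
    and I :: "'i set"
  assumes "group S"
    and "is_act S A act"
    and "\<exists>i\<in>I. \<exists>j\<in>I. i \<noteq> j"
  shows "geom_equiv S (copower_carrier I A) (copower_action act)
                      (copower_carrier {1::nat, 2} A) (copower_action act)"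
proof -
  obtain i j where "i \<in> I" "j \<in> I" "i \<noteq> j" using assms(3) by blast
  then have "act_separated_by S (copower_carrier {1::nat, 2} A) (copower_action act)
                                (copower_carrier I A) (copower_action act)"
    by (rule copower_act_separated_by_copower)
  moreover have "act_separated_by S (copower_carrier I A) (copower_action act)
                                    (copower_carrier {1::nat, 2} A) (copower_action act)"
    by (rule copower_act_separated_by_copower[of 1 _ 2]) auto
  ultimately show ?thesis
    by (intro geom_equiv_if_act_separated_by)
qed

end
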